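(* Let $m\ge2$ be even and $n\ge 2$. If $\mathcal{C}_1$ and $\mathcal{C}_2$ are positive semi-definite Cauchy tensors of order $m$ and dimension $n$, then their Hadamard product $\mathcal{C}_1\circ\mathcal{C}_2$ is positive semi-definite.
   Context: The Cauchy tensor with generating vector $c\in\mathbb{R}^n$ (with all sums $c_{i_1}+\cdots+c_{i_m}\neq0$) has entries $\frac{1}{c_{i_1}+\cdots+c_{i_m}}$, $i_j\in\{1,\dots,n\}$. The Hadamard product of tensors $\mathcal{A}=(a_{i_1\cdots i_m})$, $\mathcal{B}=(b_{i_1\cdots i_m})$ is $\mathcal{A}\circ\mathcal{B}=(a_{i_1\cdots i_m}b_{i_1\cdots i_m})$. A tensor $\mathcal{A}$ of even order is positive semi-definite if $\sum_{i_1,\dots,i_m}a_{i_1\cdots i_m}x_{i_1}\cdots x_{i_m}\ge0$ for all $x\in\mathbb{R}^n$. *)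

theory Defs
  imports "HOL-Analysis.Analysis"
begin

text \<open>A real tensor of order m and dimension n is represented as a function on
index tuples, i.e. lists of length m with entries in {0..<n} (0-based indexing).\<close>

definition indices :: "nat \<Rightarrow> nat \<Rightarrow> nat list set" where
  "indices m n = {is. length is = m \<and> set is \<subseteq> {..<n}}"

definition tensor_form :: "nat \<Rightarrow> nat \<Rightarrow> (nat list \<Rightarrow> real) \<Rightarrow> (nat \<Rightarrow> real) \<Rightarrow> real" where
  "tensor_form m n A x = (\<Sum>is\<in>indices m n. A is * (\<Prod>j<m. x (is ! j)))"

definition psd_tensor :: "nat \<Rightarrow> nat \<Rightarrow> (nat list \<Rightarrow> real) \<Rightarrow> bool" where
  "psd_tensor m n A \<longleftrightarrow> (\<forall>x :: nat \<Rightarrow> real. tensor_form m n A x \<ge> 0)"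

definition cauchy_tensor :: "nat \<Rightarrow> nat \<Rightarrow> (nat \<Rightarrow> real) \<Rightarrow> nat list \<Rightarrow> real" where
  "cauchy_tensor m n c = (\<lambda>is. 1 / (\<Sum>j<m. c (is ! j)))"

definition is_cauchy_tensor :: "nat \<Rightarrow> nat \<Rightarrow> (nat list \<Rightarrow> real) \<Rightarrow> bool" where
  "is_cauchy_tensor m n A \<longleftrightarrow>
     (\<exists>c :: nat \<Rightarrow> real.
        (\<forall>is\<in>indices m n. (\<Sum>j<m. c (is ! j)) \<noteq> 0) \<and>
        (\<forall>is\<in>indices m n. A is = cauchy_tensor m n c is))"

definition hadamard :: "(nat list \<Rightarrow> real) \<Rightarrow> (nat list \<Rightarrow> real) \<Rightarrow> nat list \<Rightarrow> real" where
  "hadamard A B = (\<lambda>is. A is * B is)"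

end

theory Submission
  imports Defs
begin

text \<open>Let C2 have generating vector c. Its diagonal entries 1/(m c_i) are values of the form
  at unit vectors, so positive semi-definiteness forces every c_i > 0. Then every index sum
  S = c_i1 + ... + c_im is positive and 1/S is the integral of t^(S-1) over [0,1], so the form of
  the Hadamard product at x is the integral over [0,1] of C1(y_t)/t, where (y_t)_i = x_i t^(c_i):
  an integral of non-negative values.\<close>

lemma finite_indices: "finite (indices m n)"
proof -
  have "indices m n = {xs. set xs \<subseteq> {..<n} \<and> length xs = m}"
    unfolding indices_def by auto
  then show ?thesis
    using finite_lists_length_eq[of "{..<n}" m] by simp
qed

lemma tensor_form_cong:
  assumes "\<And>is. is \<in> indices m n \<Longrightarrow> A is = B is"
  shows "tensor_form m n A x = tensor_form m n B x"
  unfolding tensor_form_def using assms by (intro sum.cong) auto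

lemma tensor_form_unit_vector:
  assumes "i < n"
  shows "tensor_form m n A (\<lambda>k. if k = i then 1 else 0) = A (replicate m i)"
proof -
  let ?e = "\<lambda>k. if k = i then 1 else 0 :: real"
  have diag: "replicate m i \<in> indices m n"
    using assms by (auto simp: indices_def)
  have "(\<Prod>j<m. ?e (is ! j)) = 0" if "is \<in> indices m n - {replicate m i}" for "is"
  proof -
    have "length is = m" "is \<noteq> replicate m i"
      using that by (auto simp: indices_def)
    then obtain j where "j < m" "is ! j \<noteq> i"
      by (metis in_set_conv_nth replicate_eqI)
    then show ?thesis by (intro prod_zero) auto
  qed
  then have "(\<Sum>is\<in>indices m n - {replicate m i}. A is * (\<Prod>j<m. ?e (is ! j))) = 0"
    by (intro sum.neutral) simp
  then show ?thesis
    unfolding tensor_form_def by (simp add: sum.remove[OF finite_indices diag])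
qed

lemma psd_cauchy_generator_pos:
  assumes "m \<ge> 1" and "i < n"
    and nz: "\<forall>is\<in>indices m n. (\<Sum>j<m. c (is ! j)) \<noteq> 0"
    and psd: "psd_tensor m n (cauchy_tensor m n c)"
  shows "c i > 0"
proof -
  have diag: "replicate m i \<in> indices m n"
    using assms(2) by (auto simp: indices_def)
  have "0 \<le> tensor_form m n (cauchy_tensor m n c) (\<lambda>k. if k = i then 1 else 0)"
    using psd unfolding psd_tensor_def by blast
  also have "\<dots> = 1 / (real m * c i)"
    using assms(2) by (simp add: tensor_form_unit_vector cauchy_tensor_def)
  finally have "real m * c i \<ge> 0"
    by (simp add: zero_le_divide_1_iff)
  moreover have "real m * c i \<noteq> 0"
    using nz diag by fastforce
  ultimately have "real m * c i > 0" by linarith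
  then show ?thesis
    using assms(1) by (simp add: zero_less_mult_iff)
qed

lemma index_sum_pos:
  assumes "\<forall>i<n. c i > (0::real)" and "m \<ge> 1" and "is \<in> indices m n"
  shows "(\<Sum>j<m. c (is ! j)) > 0"
proof -
  have "\<forall>j<m. c (is ! j) > 0"
    using assms unfolding indices_def by (auto simp: subset_iff)
  then show ?thesis
    using assms(2) by (intro sum_pos) (auto simp: lessThan_empty_iff)
qed

lemma tensor_form_hadamard_cauchy_has_integral:
  assumes "\<forall>i<n. c i > 0" and "m \<ge> 1"
  shows "((\<lambda>t. \<Sum>is\<in>indices m n. A is * (\<Prod>j<m. x (is ! j)) * t powr ((\<Sum>j<m. c (is ! j)) - 1))
           has_integral tensor_form m n (hadamard A (cauchy_tensor m n c)) x) {0..1}"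
  unfolding tensor_form_def
proof (rule has_integral_sum[OF finite_indices])
  fix "is" assume "is \<in> indices m n"
  define S where "S = (\<Sum>j<m. c (is ! j))"
  have "S > 0"
    unfolding S_def using index_sum_pos assms \<open>is \<in> indices m n\<close> by blast
  then have "((\<lambda>t. t powr (S - 1)) has_integral 1 / S) {0..1::real}"
    using has_integral_powr_from_0[of "S - 1" 1] by simp
  from has_integral_mult_right[OF this, of "A is * (\<Prod>j<m. x (is ! j))"]
  show "((\<lambda>t. A is * (\<Prod>j<m. x (is ! j)) * t powr (S - 1)) has_integral
          hadamard A (cauchy_tensor m n c) is * (\<Prod>j<m. x (is ! j))) {0..1}"
    by (simp add: hadamard_def cauchy_tensor_def S_def)
qed

lemma tensor_form_rescaled:
  assumes "t > 0"
  shows "(\<Sum>is\<in>indices m n. A is * (\<Prod>j<m. x (is ! j)) * t powr ((\<Sum>j<m. c (is ! j)) - 1))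
         = tensor_form m n A (\<lambda>i. x i * t powr c i) / t"
  unfolding tensor_form_def sum_divide_distrib
proof (rule sum.cong[OF refl])
  fix "is"
  have "t powr ((\<Sum>j<m. c (is ! j)) - 1) = (\<Prod>j<m. t powr c (is ! j)) / t"
    using assms by (simp add: powr_diff powr_sum)
  then show "A is * (\<Prod>j<m. x (is ! j)) * t powr ((\<Sum>j<m. c (is ! j)) - 1)
             = A is * (\<Prod>j<m. x (is ! j) * t powr c (is ! j)) / t"
    by (simp add: prod.distrib)
qed

lemma psd_hadamard_positive_cauchy:
  assumes psd: "psd_tensor m n A" and c: "\<forall>i<n. c i > 0" and "m \<ge> 1"
  shows "psd_tensor m n (hadamard A (cauchy_tensor m n c))"
  unfolding psd_tensor_def
proof
  fix x :: "nat \<Rightarrow> real"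
  show "tensor_form m n (hadamard A (cauchy_tensor m n c)) x \<ge> 0"
  proof (rule has_integral_nonneg[OF tensor_form_hadamard_cauchy_has_integral[OF c \<open>m \<ge> 1\<close>]])
    fix t :: real assume "t \<in> {0..1}"
    then consider "t = 0" | "t > 0" by fastforce
    then show "0 \<le> (\<Sum>is\<in>indices m n. A is * (\<Prod>j<m. x (is ! j)) * t powr ((\<Sum>j<m. c (is ! j)) - 1))"
    proof cases
      case 2
      then show ?thesis
        using psd by (simp add: tensor_form_rescaled psd_tensor_def)
    qed simp
  qed
qed

theorem corollary3p2:
  fixes m n :: nat and C1 C2 :: "nat list \<Rightarrow> real"
  assumes "m \<ge> 2" and "even m" and "n \<ge> 2"
    and "is_cauchy_tensor m n C1" and "psd_tensor m n C1"
    and "is_cauchy_tensor m n C2" and "psd_tensor m n C2"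
  shows "psd_tensor m n (hadamard C1 C2)"
proof -
  have "m \<ge> 1" using assms(1) by simp
  obtain c where nz: "\<forall>is\<in>indices m n. (\<Sum>j<m. c (is ! j)) \<noteq> 0"
    and C2: "\<forall>is\<in>indices m n. C2 is = cauchy_tensor m n c is"
    using assms(6) unfolding is_cauchy_tensor_def by blast
  have form_eq: "tensor_form m n (hadamard C1 C2) x
                 = tensor_form m n (hadamard C1 (cauchy_tensor m n c)) x" for x
    using C2 by (intro tensor_form_cong) (simp add: hadamard_def)
  have "psd_tensor m n (cauchy_tensor m n c)"
    using assms(7) C2 tensor_form_cong[of m n C2 "cauchy_tensor m n c"]
    unfolding psd_tensor_def by simp
  then have "\<forall>i<n. c i > 0"
    using psd_cauchy_generator_pos[OF \<open>m \<ge> 1\<close> _ nz] by blast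
  from psd_hadamard_positive_cauchy[OF assms(5) this \<open>m \<ge> 1\<close>] show ?thesis
    unfolding psd_tensor_def form_eq .
qed

end
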